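(* Let $I:(0,1)\to(0,1)$ be a nondecreasing function. Then $\|S_If\|_{L^\infty}\lesssim\|f\|_{L^\infty}$ and $\|S_If\|_{m_I}\lesssim\|f\|_{m_I}$ for all $f\in\mathcal M_+(0,1)$; that is, $S_I$ is bounded on $L^\infty$ and on $m_I$.
   Context: $\mathcal M_+(0,1)$: nonnegative measurable functions on $(0,1)$; $f^*$ the nonincreasing rearrangement. $S_If(t)=\frac1{I(t)}\sup_{0<s\le t}I(s)f^*(s)$ for $t\in(0,1)$. $\|f\|_{m_I}=\sup_{0<t<1}I(t)f^*(t)$. $A\lesssim B$ means $A\le CB$ with $C$ independent of $f$. *)

theory Defs
  imports "HOL-Analysis.Analysis"
begin

text \<open>Functions in M_+(0,1) are modelled as Borel measurable f :: real => ennreal;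
  only their values on the open interval (0,1) are used.\<close>

definition distrib_fn :: "(real \<Rightarrow> ennreal) \<Rightarrow> ennreal \<Rightarrow> ennreal" where
  "distrib_fn f lam = emeasure lborel {x \<in> {0<..<1}. f x > lam}"

definition rearr :: "(real \<Rightarrow> ennreal) \<Rightarrow> real \<Rightarrow> ennreal" where
  "rearr f t = Inf {lam. distrib_fn f lam \<le> ennreal t}"

definition S_op :: "(real \<Rightarrow> real) \<Rightarrow> (real \<Rightarrow> ennreal) \<Rightarrow> real \<Rightarrow> ennreal" where
  "S_op I f t = (if t \<in> {0<..<1}
      then (SUP s\<in>{0<..t}. ennreal (I s) * rearr f s) / ennreal (I t) else 0)"

definition Linf_norm :: "(real \<Rightarrow> ennreal) \<Rightarrow> ennreal" where
  "Linf_norm f = Inf {c. emeasure lborel {x \<in> {0<..<1}. f x > c} = 0}"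

definition mI_norm :: "(real \<Rightarrow> real) \<Rightarrow> (real \<Rightarrow> ennreal) \<Rightarrow> ennreal" where
  "mI_norm I f = (SUP t\<in>{0<..<1}. ennreal (I t) * rearr f t)"

end

theory Submission
  imports Defs
begin

text \<open>Both bounds hold with constant 1. Since I is nondecreasing, every term I(s) f*(s) with
  s \<le> t is at most I(t) ||f||_inf, so S_I f \<le> ||f||_inf pointwise. Moreover
  S_I f(x) \<le> ||f||_mI / I(x), and this majorant is nonincreasing in x; a function dominated
  by a nonincreasing h has rearrangement at most h, whence I(t) (S_I f)*(t) \<le> ||f||_mI.\<close>

lemma rearr_le_of_distrib_fn_le:
  assumes "distrib_fn g c \<le> ennreal t"
  shows "rearr g t \<le> c"
  unfolding rearr_def using assms by (intro Inf_lower) simp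

lemma rearr_le_Linf_norm:
  assumes "0 \<le> t"
  shows "rearr f t \<le> Linf_norm f"
  unfolding Linf_norm_def
proof (rule Inf_greatest)
  fix c assume "c \<in> {c. emeasure lborel {x \<in> {0<..<1}. f x > c} = 0}"
  then have "distrib_fn f c \<le> ennreal t" unfolding distrib_fn_def by simp
  then show "rearr f t \<le> c" by (rule rearr_le_of_distrib_fn_le)
qed

lemma Linf_norm_le:
  assumes "\<And>x. x \<in> {0<..<1} \<Longrightarrow> g x \<le> c"
  shows "Linf_norm g \<le> c"
  unfolding Linf_norm_def
proof (rule Inf_lower)
  have "{x \<in> {0<..<1}. g x > c} = {}" using assms by (auto simp: not_less[symmetric])
  then show "c \<in> {c. emeasure lborel {x \<in> {0<..<1}. g x > c} = 0}"
    by (simp only: mem_Collect_eq emeasure_empty)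
qed

lemma rearr_le_antimono_majorant:
  assumes le: "\<And>x. x \<in> {0<..<1} \<Longrightarrow> g x \<le> h x"
    and h: "antimono_on {0<..<1} h"
    and t: "t \<in> {0<..<1}"
  shows "rearr g t \<le> h t"
proof (rule rearr_le_of_distrib_fn_le)
  have "{x \<in> {0<..<1}. g x > h t} \<subseteq> {0<..<t}"
  proof
    fix x assume "x \<in> {x \<in> {0<..<1}. g x > h t}"
    then have x: "x \<in> {0<..<1}" and gt: "g x > h t" by auto
    have "x < t"
    proof (rule ccontr)
      assume "\<not> x < t"
      then have "g x \<le> h t" using le[OF x] monotone_onD[OF h t x] by force
      then show False using gt by simp
    qed
    then show "x \<in> {0<..<t}" using x by simp
  qed
  then have "distrib_fn g (h t) \<le> emeasure lborel {0<..<t}"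
    unfolding distrib_fn_def by (rule emeasure_mono) simp
  also have "\<dots> = ennreal t" using t by simp
  finally show "distrib_fn g (h t) \<le> ennreal t" .
qed

lemma S_op_le_Linf_norm:
  fixes I :: "real \<Rightarrow> real"
  assumes pos: "\<forall>t\<in>{0<..<1}. 0 < I t"
    and mono: "mono_on {0<..<1} I"
  shows "S_op I f t \<le> Linf_norm f"
proof (cases "t \<in> {0<..<1}")
  case t: True
  let ?L = "Linf_norm f"
  have "(SUP s\<in>{0<..t}. ennreal (I s) * rearr f s) \<le> ennreal (I t) * ?L"
  proof (rule SUP_least)
    fix s assume s: "s \<in> {0<..t}"
    then have "I s \<le> I t" using mono t by (auto intro: mono_onD)
    moreover have "rearr f s \<le> ?L" using s by (intro rearr_le_Linf_norm) auto
    ultimately show "ennreal (I s) * rearr f s \<le> ennreal (I t) * ?L"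
      by (intro mult_mono ennreal_leI) auto
  qed
  then have "S_op I f t \<le> ennreal (I t) * ?L / ennreal (I t)"
    unfolding S_op_def using t by (simp add: divide_right_mono_ennreal)
  also have "\<dots> = ?L"
    using pos t by (subst mult.commute, intro mult_divide_eq_ennreal) (auto simp: ennreal_eq_0_iff not_le)
  finally show ?thesis .
qed (auto simp: S_op_def)

lemma S_op_le_mI_norm_div:
  assumes x: "x \<in> {0<..<1}"
  shows "S_op I f x \<le> mI_norm I f / ennreal (I x)"
proof -
  have "(SUP s\<in>{0<..x}. ennreal (I s) * rearr f s) \<le> mI_norm I f"
    unfolding mI_norm_def using x by (intro SUP_subset_mono) auto
  then show ?thesis unfolding S_op_def using x by (simp add: divide_right_mono_ennreal)
qed

lemma antimono_on_divide_ennreal: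
  fixes I :: "real \<Rightarrow> real"
  assumes pos: "\<forall>t\<in>A. 0 < I t"
    and mono: "mono_on A I"
  shows "antimono_on A (\<lambda>x. c / ennreal (I x))"
proof (rule monotone_onI)
  fix x y assume x: "x \<in> A" and y: "y \<in> A" and "x \<le> y"
  then have "inverse (I y) \<le> inverse (I x)"
    using pos mono by (intro le_imp_inverse_le) (auto intro: mono_onD)
  then have "inverse (ennreal (I y)) \<le> inverse (ennreal (I x))"
    using pos x y by (simp add: inverse_ennreal ennreal_leI)
  then show "c / ennreal (I y) \<le> c / ennreal (I x)"
    unfolding divide_ennreal_def by (intro mult_left_mono) auto
qed

lemma mI_norm_S_op_le:
  fixes I :: "real \<Rightarrow> real"
  assumes pos: "\<forall>t\<in>{0<..<1}. 0 < I t"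
    and mono: "mono_on {0<..<1} I"
  shows "mI_norm I (S_op I f) \<le> mI_norm I f"
  unfolding mI_norm_def[of I "S_op I f"]
proof (rule SUP_least)
  fix t :: real assume t: "t \<in> {0<..<1}"
  let ?M = "mI_norm I f"
  have "rearr (S_op I f) t \<le> ?M / ennreal (I t)"
    using S_op_le_mI_norm_div antimono_on_divide_ennreal[OF pos mono] t
    by (rule rearr_le_antimono_majorant)
  then have "ennreal (I t) * rearr (S_op I f) t \<le> ennreal (I t) * (?M / ennreal (I t))"
    by (rule mult_left_mono) simp
  also have "\<dots> = ?M"
    using pos t by (simp add: ennreal_times_divide, subst mult.commute, intro mult_divide_eq_ennreal)
      (auto simp: ennreal_eq_0_iff not_le)
  finally show "ennreal (I t) * rearr (S_op I f) t \<le> ?M" .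
qed

theorem theorem3p4:
  fixes I :: "real \<Rightarrow> real"
  assumes "\<forall>t\<in>{0<..<1}. I t \<in> {0<..<1}"
    and "mono_on {0<..<1} I"
  shows "\<exists>C::real. C > 0 \<and>
    (\<forall>f \<in> borel_measurable lborel.
       Linf_norm (S_op I f) \<le> ennreal C * Linf_norm f \<and>
       mI_norm I (S_op I f) \<le> ennreal C * mI_norm I f)"
proof (intro exI[of _ 1] conjI ballI)
  have pos: "\<forall>t\<in>{0<..<1}. 0 < I t" using assms(1) by auto
  fix f :: "real \<Rightarrow> ennreal"
  show "Linf_norm (S_op I f) \<le> ennreal 1 * Linf_norm f"
    using Linf_norm_le S_op_le_Linf_norm[OF pos assms(2)] by simp
  show "mI_norm I (S_op I f) \<le> ennreal 1 * mI_norm I f"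
    using mI_norm_S_op_le[OF pos assms(2)] by simp
qed simp

end
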